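(* Let $p\in(0,1)$, $\beta>0$, $\mu_P,\mu_N\in\mathbb R^d$ and let $\Sigma_P,\Sigma_N$ be symmetric positive semidefinite $d\times d$ matrices. For $\alpha\in(0,1)$ let $\pi(\alpha)=\sqrt{(1-\alpha)/\alpha}$. Consider the optimization problem $$\min_{\alpha_P,\alpha_N\in(0,1),\,w\in\mathbb R^d\setminus\{0\},\,b\in\mathbb R}\ \frac{(1-p)\alpha_N+\beta^2p\,\alpha_P}{1-\alpha_P}$$ subject to $$w^T\mu_P-b\ge\pi(\alpha_P)\sqrt{w^T\Sigma_P w},\qquad b-w^T\mu_N\ge\pi(\alpha_N)\sqrt{w^T\Sigma_N w}.$$ Then the minimal value of this problem is attained at a point where both inequality constraints hold with equality; i.e., at an optimal solution $(w^\star,b^\star,\alpha_P^\star,\alpha_N^\star)$ one has $(w^\star)^T\mu_P-b^\star=\pi(\alpha_P^\star)\sqrt{(w^\star)^T\Sigma_P w^\star}$ and $b^\star-(w^\star)^T\mu_N=\pi(\alpha_N^\star)\sqrt{(w^\star)^T\Sigma_N w^\star}$.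
   Context: $\mu_P,\Sigma_P$ and $\mu_N,\Sigma_N$ are the mean and covariance matrix of the positive and negative class, respectively; $\alpha_P$ and $\alpha_N$ play the roles of worst-case false negative and false positive rates. *)

theory Defs
  imports "HOL-Analysis.Analysis"
begin

definition pi_fn :: "real \<Rightarrow> real" where
  "pi_fn \<alpha> = sqrt ((1 - \<alpha>) / \<alpha>)"

definition psd_sym :: "real ^ 'd ^ 'd \<Rightarrow> bool" where
  "psd_sym S \<longleftrightarrow> transpose S = S \<and> (\<forall>x. 0 \<le> x \<bullet> (S *v x))"

definition mpm_obj :: "real \<Rightarrow> real \<Rightarrow> real \<Rightarrow> real \<Rightarrow> real" where
  "mpm_obj p \<beta> \<alpha>P \<alpha>N = ((1 - p) * \<alpha>N + \<beta>\<^sup>2 * p * \<alpha>P) / (1 - \<alpha>P)"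

definition mpm_feasible ::
  "real ^ 'd \<Rightarrow> real ^ 'd ^ 'd \<Rightarrow> real ^ 'd \<Rightarrow> real ^ 'd ^ 'd
   \<Rightarrow> real ^ 'd \<Rightarrow> real \<Rightarrow> real \<Rightarrow> real \<Rightarrow> bool" where
  "mpm_feasible \<mu>P \<Sigma>P \<mu>N \<Sigma>N w b \<alpha>P \<alpha>N \<longleftrightarrow>
     0 < \<alpha>P \<and> \<alpha>P < 1 \<and> 0 < \<alpha>N \<and> \<alpha>N < 1 \<and> w \<noteq> 0 \<and>
     w \<bullet> \<mu>P - b \<ge> pi_fn \<alpha>P * sqrt (w \<bullet> (\<Sigma>P *v w)) \<and>
     b - w \<bullet> \<mu>N \<ge> pi_fn \<alpha>N * sqrt (w \<bullet> (\<Sigma>N *v w))"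

definition mpm_optimal ::
  "real \<Rightarrow> real \<Rightarrow> real ^ 'd \<Rightarrow> real ^ 'd ^ 'd \<Rightarrow> real ^ 'd \<Rightarrow> real ^ 'd ^ 'd
   \<Rightarrow> real ^ 'd \<Rightarrow> real \<Rightarrow> real \<Rightarrow> real \<Rightarrow> bool" where
  "mpm_optimal p \<beta> \<mu>P \<Sigma>P \<mu>N \<Sigma>N w b \<alpha>P \<alpha>N \<longleftrightarrow>
     mpm_feasible \<mu>P \<Sigma>P \<mu>N \<Sigma>N w b \<alpha>P \<alpha>N \<and>
     (\<forall>w' b' \<alpha>P' \<alpha>N'. mpm_feasible \<mu>P \<Sigma>P \<mu>N \<Sigma>N w' b' \<alpha>P' \<alpha>N' \<longrightarrow>
        mpm_obj p \<beta> \<alpha>P \<alpha>N \<le> mpm_obj p \<beta> \<alpha>P' \<alpha>N')"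

end

theory Submission
  imports Defs
begin

text \<open>The objective is strictly increasing in both \<open>\<alpha>\<^sub>P\<close> and \<open>\<alpha>\<^sub>N\<close>, while \<open>pi_fn\<close> maps
  \<open>(0,1)\<close> decreasingly onto \<open>(0,\<infinity>)\<close>. Hence if a constraint of a feasible point is slack,
  the corresponding \<open>\<alpha>\<close> can be lowered until the constraint becomes tight (or, if its
  quadratic form vanishes, lowered arbitrarily), keeping feasibility and strictly decreasing
  the objective; so an optimal point cannot have a slack constraint.\<close>

lemma pi_fn_less_iff:
  assumes "0 < a" "0 < a'"
  shows "pi_fn a < pi_fn a' \<longleftrightarrow> a' < a"
proof -
  have "(1 - a) / a < (1 - a') / a' \<longleftrightarrow> 1 / a < 1 / a'"
    using assms by (simp add: diff_divide_distrib)
  also have "\<dots> \<longleftrightarrow> a' < a"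
    using assms by (simp add: divide_simps)
  finally show ?thesis
    unfolding pi_fn_def by simp
qed

lemma pi_fn_inverse:
  assumes "0 \<le> t"
  shows "pi_fn (1 / (1 + t\<^sup>2)) = t"
proof -
  have "0 < 1 + t\<^sup>2"
    by (simp add: add_pos_nonneg)
  then have "(1 - 1 / (1 + t\<^sup>2)) / (1 / (1 + t\<^sup>2)) = t\<^sup>2"
    by (simp add: field_simps)
  then show ?thesis
    unfolding pi_fn_def using assms by simp
qed

lemma slack_allows_smaller_alpha:
  assumes "0 < a" "a < 1" "0 \<le> s" "pi_fn a * s < c"
  obtains a' where "0 < a'" "a' < a" "pi_fn a' * s \<le> c"
proof (cases "s = 0")
  case True
  then show ?thesis
    using assms that[of "a / 2"] by auto
next
  case False
  then have "0 < s"
    using assms(3) by simp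
  define t where "t = c / s"
  have "0 \<le> pi_fn a"
    unfolding pi_fn_def using assms(1,2) by simp
  moreover have "pi_fn a < t"
    using assms(4) \<open>0 < s\<close> unfolding t_def by (simp add: field_simps)
  ultimately have "0 < t"
    by linarith
  define a' where "a' = 1 / (1 + t\<^sup>2)"
  have "0 < a'"
    unfolding a'_def by (simp add: add_pos_nonneg)
  have "pi_fn a' = t"
    unfolding a'_def using \<open>0 < t\<close> by (simp add: pi_fn_inverse)
  then have "a' < a"
    using pi_fn_less_iff[OF assms(1) \<open>0 < a'\<close>] \<open>pi_fn a < t\<close> by simp
  moreover have "pi_fn a' * s = c"
    using \<open>pi_fn a' = t\<close> \<open>0 < s\<close> unfolding t_def by simp
  ultimately show ?thesis
    using that \<open>0 < a'\<close> by simp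
qed

lemma mpm_obj_strict_mono_alphaP:
  assumes "0 < p" "p \<le> 1" "\<beta> \<noteq> 0" "0 \<le> n" "a' < a" "a < 1"
  shows "mpm_obj p \<beta> a' n < mpm_obj p \<beta> a n"
proof -
  define K where "K = (1 - p) * n"
  define M where "M = \<beta>\<^sup>2 * p"
  have "0 < K + M"
    unfolding K_def M_def using assms by (simp add: add_nonneg_pos)
  have "(K + M * a) * (1 - a') - (K + M * a') * (1 - a) = (K + M) * (a - a')"
    by (simp add: algebra_simps)
  also have "\<dots> > 0"
    using \<open>0 < K + M\<close> assms by simp
  finally have "(K + M * a') / (1 - a') < (K + M * a) / (1 - a)"
    using assms by (simp add: divide_simps)
  then show ?thesis
    unfolding mpm_obj_def K_def M_def by (simp add: mult.assoc)
qed

lemma mpm_obj_strict_mono_alphaN: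
  assumes "p < 1" "a < 1" "n' < n"
  shows "mpm_obj p \<beta> a n' < mpm_obj p \<beta> a n"
  unfolding mpm_obj_def using assms by (simp add: divide_strict_right_mono)

lemma psd_sym_sqrt_quadratic_nonneg:
  assumes "psd_sym S"
  shows "0 \<le> sqrt (x \<bullet> (S *v x))"
  using assms unfolding psd_sym_def by simp

lemma mpm_optimal_tight_P:
  assumes "0 < p" "p < 1" "0 < \<beta>" "psd_sym \<Sigma>P"
    and opt: "mpm_optimal p \<beta> \<mu>P \<Sigma>P \<mu>N \<Sigma>N w b \<alpha>P \<alpha>N"
  shows "w \<bullet> \<mu>P - b = pi_fn \<alpha>P * sqrt (w \<bullet> (\<Sigma>P *v w))"
proof (rule ccontr)
  note feas = opt[unfolded mpm_optimal_def mpm_feasible_def]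
  assume "w \<bullet> \<mu>P - b \<noteq> pi_fn \<alpha>P * sqrt (w \<bullet> (\<Sigma>P *v w))"
  then have "pi_fn \<alpha>P * sqrt (w \<bullet> (\<Sigma>P *v w)) < w \<bullet> \<mu>P - b"
    using feas by linarith
  then obtain a' where a': "0 < a'" "a' < \<alpha>P" "pi_fn a' * sqrt (w \<bullet> (\<Sigma>P *v w)) \<le> w \<bullet> \<mu>P - b"
    using slack_allows_smaller_alpha psd_sym_sqrt_quadratic_nonneg[OF \<open>psd_sym \<Sigma>P\<close>] feas
    by metis
  then have "mpm_feasible \<mu>P \<Sigma>P \<mu>N \<Sigma>N w b a' \<alpha>N"
    using feas unfolding mpm_feasible_def by auto
  then have "mpm_obj p \<beta> \<alpha>P \<alpha>N \<le> mpm_obj p \<beta> a' \<alpha>N"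
    using opt unfolding mpm_optimal_def by blast
  moreover have "mpm_obj p \<beta> a' \<alpha>N < mpm_obj p \<beta> \<alpha>P \<alpha>N"
    using mpm_obj_strict_mono_alphaP assms(1-3) a'(2) feas by simp
  ultimately show False
    by linarith
qed

lemma mpm_optimal_tight_N:
  assumes "p < 1" "psd_sym \<Sigma>N"
    and opt: "mpm_optimal p \<beta> \<mu>P \<Sigma>P \<mu>N \<Sigma>N w b \<alpha>P \<alpha>N"
  shows "b - w \<bullet> \<mu>N = pi_fn \<alpha>N * sqrt (w \<bullet> (\<Sigma>N *v w))"
proof (rule ccontr)
  note feas = opt[unfolded mpm_optimal_def mpm_feasible_def]
  assume "b - w \<bullet> \<mu>N \<noteq> pi_fn \<alpha>N * sqrt (w \<bullet> (\<Sigma>N *v w))"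
  then have "pi_fn \<alpha>N * sqrt (w \<bullet> (\<Sigma>N *v w)) < b - w \<bullet> \<mu>N"
    using feas by linarith
  then obtain a' where a': "0 < a'" "a' < \<alpha>N" "pi_fn a' * sqrt (w \<bullet> (\<Sigma>N *v w)) \<le> b - w \<bullet> \<mu>N"
    using slack_allows_smaller_alpha psd_sym_sqrt_quadratic_nonneg[OF \<open>psd_sym \<Sigma>N\<close>] feas
    by metis
  then have "mpm_feasible \<mu>P \<Sigma>P \<mu>N \<Sigma>N w b \<alpha>P a'"
    using feas unfolding mpm_feasible_def by auto
  then have "mpm_obj p \<beta> \<alpha>P \<alpha>N \<le> mpm_obj p \<beta> \<alpha>P a'"
    using opt unfolding mpm_optimal_def by blast
  moreover have "mpm_obj p \<beta> \<alpha>P a' < mpm_obj p \<beta> \<alpha>P \<alpha>N"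
    using mpm_obj_strict_mono_alphaN \<open>p < 1\<close> a'(2) feas by simp
  ultimately show False
    by linarith
qed

theorem lemma4:
  fixes p \<beta> :: real and \<mu>P \<mu>N :: "real ^ 'd" and \<Sigma>P \<Sigma>N :: "real ^ 'd ^ 'd"
    and w :: "real ^ 'd" and b \<alpha>P \<alpha>N :: real
  assumes "0 < p" "p < 1" "0 < \<beta>"
    and "psd_sym \<Sigma>P" "psd_sym \<Sigma>N"
    and "mpm_optimal p \<beta> \<mu>P \<Sigma>P \<mu>N \<Sigma>N w b \<alpha>P \<alpha>N"
  shows "w \<bullet> \<mu>P - b = pi_fn \<alpha>P * sqrt (w \<bullet> (\<Sigma>P *v w))
       \<and> b - w \<bullet> \<mu>N = pi_fn \<alpha>N * sqrt (w \<bullet> (\<Sigma>N *v w))"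
  using mpm_optimal_tight_P[OF assms(1-4,6)] mpm_optimal_tight_N[OF assms(2,5,6)] by simp

end
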